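(* There exists a PBD$(124,\{3,4\})$ of dimension three.
   Context: For a positive integer $v$ and $K \subseteq \{2,3,4,\dots\}$, a pairwise balanced design PBD$(v,K)$ is a pair $(X,\mathcal{B})$ where $X$ is a $v$-set of points and $\mathcal{B}$ is a family of subsets of $X$ (blocks), each of size in $K$, such that any two distinct points of $X$ lie together in exactly one block. A flat (subdesign) is a pair $(Y,\mathcal{B}_Y)$ with $Y \subseteq X$ and $\mathcal{B}_Y = \{B \in \mathcal{B} : B \subseteq Y\}$ such that any two distinct points of $Y$ lie together in exactly one block of $\mathcal{B}_Y$; it is proper if $Y \ne X$. The dimension of the PBD is the maximum integer $d$ such that every set of $d$ points is contained in a proper flat. *)

theory Defs
  imports Main
begin

definition pbd :: "'a set \<Rightarrow> 'a set set \<Rightarrow> nat set \<Rightarrow> bool" where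
  "pbd X B K \<longleftrightarrow> finite X \<and> K \<subseteq> {2..} \<and>
     (\<forall>b\<in>B. b \<subseteq> X \<and> card b \<in> K) \<and>
     (\<forall>x\<in>X. \<forall>y\<in>X. x \<noteq> y \<longrightarrow> (\<exists>!b. b \<in> B \<and> x \<in> b \<and> y \<in> b))"

definition is_flat :: "'a set \<Rightarrow> 'a set set \<Rightarrow> 'a set \<Rightarrow> bool" where
  "is_flat X B Y \<longleftrightarrow> Y \<subseteq> X \<and>
     (\<forall>x\<in>Y. \<forall>y\<in>Y. x \<noteq> y \<longrightarrow> (\<exists>!b. b \<in> {c \<in> B. c \<subseteq> Y} \<and> x \<in> b \<and> y \<in> b))"

definition proper_flat :: "'a set \<Rightarrow> 'a set set \<Rightarrow> 'a set \<Rightarrow> bool" where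
  "proper_flat X B Y \<longleftrightarrow> is_flat X B Y \<and> Y \<noteq> X"

definition dim_prop :: "'a set \<Rightarrow> 'a set set \<Rightarrow> nat \<Rightarrow> bool" where
  "dim_prop X B d \<longleftrightarrow>
     (\<forall>S. S \<subseteq> X \<and> card S = d \<longrightarrow> (\<exists>Y. proper_flat X B Y \<and> S \<subseteq> Y))"

text \<open>Dimension: the maximum d (among d \<le> |X|, i.e. where d-sets of points exist)
  such that every set of d points lies in a proper flat.\<close>
definition pbd_dimension :: "'a set \<Rightarrow> 'a set set \<Rightarrow> nat" where
  "pbd_dimension X B = (GREATEST d. d \<le> card X \<and> dim_prop X B d)"

end

theory Submission
  imports Defs "HOL-Analysis.Cartesian_Space"
begin

text \<open>
  Begin with the PBD(31, {3,4}) formed by the 27 points of AG(3,3) together with the four points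
  of one line at infinity of PG(3,3); its blocks are the traces of projective lines, and the traces
  of projective planes are proper flats, so every three points lie in a proper flat.
  Inflate it by GF(4): every point becomes a group of four points and every block l becomes the
  transversal design formed by the graphs of the 16 affine maps GF(4) \<rightarrow> GF(4), read on l through
  an injective labelling of l.  The result is a PBD(124, {3,4}), and planes times GF(4) are still
  proper flats, so its dimension is at least three.

  Conversely, let a flat contain (O,0), (A1,0), (A2,0), (A3,1) for an affine frame O, A1, A2, A3.
  Level 0 spreads along the lines OA1, OA2, A1A2 to their points at infinity; on each line
  O A3, A1 A3, A2 A3 the third point Q_i acquires a level outside {0,1}.  GF(4) has only two such
  values, so two of the Q_i share a level, and the line through them meets the line at infinity
  in a point carrying two levels, whose whole group then lies in the flat.  Whole groups spread
  along blocks, and the points with whole groups form a flat of the base design containing an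
  affine frame, which is everything.  Hence this 4-set lies in no proper flat.
\<close>

section \<open>Flats and dimension of pairwise balanced designs\<close>

lemma pbd_unique_block:
  assumes "pbd X B K" "x \<in> X" "y \<in> X" "x \<noteq> y"
  shows "\<exists>!b. b \<in> B \<and> x \<in> b \<and> y \<in> b"
  using assms unfolding pbd_def by blast

lemma pbd_block_subset: "pbd X B K \<Longrightarrow> b \<in> B \<Longrightarrow> b \<subseteq> X"
  unfolding pbd_def by blast

lemma is_flat_subset: "is_flat X B Y \<Longrightarrow> Y \<subseteq> X"
  unfolding is_flat_def by blast

lemma is_flatI:
  assumes "pbd X B K" "Y \<subseteq> X"
    and closed: "\<And>x y b. x \<in> Y \<Longrightarrow> y \<in> Y \<Longrightarrow> x \<noteq> y \<Longrightarrow> b \<in> B \<Longrightarrow> x \<in> b \<Longrightarrow> y \<in> b \<Longrightarrow> b \<subseteq> Y"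
  shows "is_flat X B Y"
  unfolding is_flat_def
proof (intro conjI ballI impI)
  fix x y assume xy: "x \<in> Y" "y \<in> Y" "x \<noteq> y"
  then have "\<exists>!b. b \<in> B \<and> x \<in> b \<and> y \<in> b"
    using pbd_unique_block[OF assms(1)] assms(2) by blast
  then show "\<exists>!b. b \<in> {c \<in> B. c \<subseteq> Y} \<and> x \<in> b \<and> y \<in> b"
    using closed[OF xy] by blast
qed fact

lemma is_flat_block_subset:
  assumes "pbd X B K" "is_flat X B Y" "x \<in> Y" "y \<in> Y" "x \<noteq> y" "b \<in> B" "x \<in> b" "y \<in> b"
  shows "b \<subseteq> Y"
proof -
  obtain c where c: "c \<in> B" "c \<subseteq> Y" "x \<in> c" "y \<in> c"
    using assms(2-5) unfolding is_flat_def by blast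
  have "\<exists>!b. b \<in> B \<and> x \<in> b \<and> y \<in> b"
    using pbd_unique_block[OF assms(1)] is_flat_subset[OF assms(2)] assms(3-5) by blast
  then have "b = c" using c assms(6-8) by blast
  then show ?thesis using c by simp
qed

lemma dim_prop_antimono:
  assumes "finite X" "dim_prop X B d'" "d \<le> d'" "d' \<le> card X"
  shows "dim_prop X B d"
  unfolding dim_prop_def
proof (intro allI impI)
  fix S assume S: "S \<subseteq> X \<and> card S = d"
  then have "finite S" using assms(1) finite_subset by blast
  have "d' - d \<le> card (X - S)" using S assms by (simp add: card_Diff_subset \<open>finite S\<close>)
  then obtain T where T: "T \<subseteq> X - S" "card T = d' - d"
    by (meson obtain_subset_with_card_n)
  have "finite T" using T assms(1) finite_subset by blast
  have "card (S \<union> T) = d'"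
    using T S \<open>finite S\<close> \<open>finite T\<close> assms(3) by (subst card_Un_disjoint) auto
  moreover have "S \<union> T \<subseteq> X" using S T by blast
  ultimately obtain Y where "proper_flat X B Y" "S \<union> T \<subseteq> Y"
    using assms(2) unfolding dim_prop_def by blast
  then show "\<exists>Y. proper_flat X B Y \<and> S \<subseteq> Y" by blast
qed

lemma pbd_dimension_eqI:
  assumes "finite X" "dim_prop X B d" "Suc d \<le> card X" "\<not> dim_prop X B (Suc d)"
  shows "pbd_dimension X B = d"
  unfolding pbd_dimension_def
proof (rule Greatest_equality)
  show "d \<le> card X \<and> dim_prop X B d" using assms(2,3) by simp
  fix d' assume "d' \<le> card X \<and> dim_prop X B d'"
  then show "d' \<le> d"
    using dim_prop_antimono[OF assms(1), of B d' "Suc d"] assms(4) by (meson not_less_eq_eq)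
qed

lemma pbd_image:
  assumes inj: "inj_on f X" and p: "pbd X B K"
  shows "pbd (f ` X) ((`) f ` B) K"
  unfolding pbd_def
proof (intro conjI ballI impI)
  show "finite (f ` X)" and "K \<subseteq> {2..}" using p unfolding pbd_def by auto
  fix b' assume "b' \<in> (`) f ` B"
  then obtain b where b: "b \<in> B" "b' = f ` b" by blast
  then have "b \<subseteq> X" "card b \<in> K" using p unfolding pbd_def by auto
  then show "b' \<subseteq> f ` X" "card b' \<in> K"
    using b card_image[OF inj_on_subset[OF inj]] by auto
next
  fix x' y' assume "x' \<in> f ` X" "y' \<in> f ` X" "x' \<noteq> y'"
  then obtain x y where xy: "x \<in> X" "y \<in> X" "x \<noteq> y" "x' = f x" "y' = f y" by blast
  have mem: "f z \<in> f ` b \<longleftrightarrow> z \<in> b" if "z \<in> X" "b \<in> B" for z b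
    using inj_on_image_mem_iff[OF inj that(1) pbd_block_subset[OF p that(2)]] .
  obtain b where b: "b \<in> B" "x \<in> b" "y \<in> b"
    and unique: "\<And>c. c \<in> B \<Longrightarrow> x \<in> c \<Longrightarrow> y \<in> c \<Longrightarrow> c = b"
    using pbd_unique_block[OF p xy(1-3)] by blast
  show "\<exists>!b'. b' \<in> (`) f ` B \<and> x' \<in> b' \<and> y' \<in> b'"
  proof (rule ex1I[of _ "f ` b"])
    show "f ` b \<in> (`) f ` B \<and> x' \<in> f ` b \<and> y' \<in> f ` b" using b xy by blast
    fix c' assume "c' \<in> (`) f ` B \<and> x' \<in> c' \<and> y' \<in> c'"
    then obtain c where c: "c \<in> B" "c' = f ` c" "f x \<in> f ` c" "f y \<in> f ` c"
      using xy(4,5) by auto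
    then have "x \<in> c" "y \<in> c" using mem[OF xy(1) c(1)] mem[OF xy(2) c(1)] by blast+
    then show "c' = f ` b" using unique c(1,2) by blast
  qed
qed

lemma is_flat_image:
  assumes inj: "inj_on f X" and p: "pbd X B K" and flat: "is_flat X B Y"
  shows "is_flat (f ` X) ((`) f ` B) (f ` Y)"
proof (rule is_flatI[OF pbd_image[OF inj p]])
  have YX: "Y \<subseteq> X" using is_flat_subset[OF flat] .
  then show "f ` Y \<subseteq> f ` X" by blast
  fix u' w' b' assume h: "u' \<in> f ` Y" "w' \<in> f ` Y" "u' \<noteq> w'" "b' \<in> (`) f ` B" "u' \<in> b'" "w' \<in> b'"
  then obtain u w c where uwc: "u \<in> Y" "w \<in> Y" "u' = f u" "w' = f w" "c \<in> B" "b' = f ` c"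
    by blast
  have "u \<in> c" "w \<in> c" "u \<noteq> w"
    using h uwc YX inj_on_image_mem_iff[OF inj _ pbd_block_subset[OF p uwc(5)]] by auto
  then have "c \<subseteq> Y" using is_flat_block_subset[OF p flat uwc(1,2) _ uwc(5)] by simp
  then show "b' \<subseteq> f ` Y" using uwc by blast
qed

lemma is_flat_vimage:
  assumes inj: "inj_on f X" and p: "pbd X B K" and flat: "is_flat (f ` X) ((`) f ` B) Y'"
  shows "is_flat X B (X \<inter> f -` Y')"
proof (rule is_flatI[OF p])
  fix u w c assume h: "u \<in> X \<inter> f -` Y'" "w \<in> X \<inter> f -` Y'" "u \<noteq> w" "c \<in> B" "u \<in> c" "w \<in> c"
  have "f u \<noteq> f w" using h(1-3) inj unfolding inj_on_def by blast
  then have "f ` c \<subseteq> Y'"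
    using is_flat_block_subset[OF pbd_image[OF inj p] flat, of "f u" "f w" "f ` c"] h by auto
  then show "c \<subseteq> X \<inter> f -` Y'" using pbd_block_subset[OF p h(4)] by blast
qed blast

lemma dim_prop_image:
  assumes inj: "inj_on f X" and p: "pbd X B K"
  shows "dim_prop (f ` X) ((`) f ` B) d \<longleftrightarrow> dim_prop X B d"
proof
  assume dim: "dim_prop (f ` X) ((`) f ` B) d"
  show "dim_prop X B d"
    unfolding dim_prop_def
  proof (intro allI impI)
    fix S assume S: "S \<subseteq> X \<and> card S = d"
    then have "f ` S \<subseteq> f ` X \<and> card (f ` S) = d"
      using card_image[OF inj_on_subset[OF inj]] by auto
    then obtain Y' where Y': "proper_flat (f ` X) ((`) f ` B) Y'" "f ` S \<subseteq> Y'"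
      using dim unfolding dim_prop_def by blast
    then have "is_flat X B (X \<inter> f -` Y')" "X \<inter> f -` Y' \<noteq> X"
      using is_flat_vimage[OF inj p] is_flat_subset[of "f ` X"]
      unfolding proper_flat_def by blast+
    moreover have "S \<subseteq> X \<inter> f -` Y'" using S Y'(2) by blast
    ultimately show "\<exists>Y. proper_flat X B Y \<and> S \<subseteq> Y" unfolding proper_flat_def by blast
  qed
next
  assume dim: "dim_prop X B d"
  show "dim_prop (f ` X) ((`) f ` B) d"
    unfolding dim_prop_def
  proof (intro allI impI)
    fix S' assume S': "S' \<subseteq> f ` X \<and> card S' = d"
    let ?S = "X \<inter> f -` S'"
    have "f ` ?S = S'" using S' by blast
    then have "card ?S = d" using S' card_image[OF inj_on_subset[OF inj, of ?S]] by auto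
    then obtain Y where Y: "is_flat X B Y" "Y \<noteq> X" "?S \<subseteq> Y"
      using dim unfolding dim_prop_def proper_flat_def by blast
    have "f ` Y \<noteq> f ` X"
      using Y(2) is_flat_subset[OF Y(1)] inj_on_image_eq_iff[OF inj] by blast
    moreover have "S' \<subseteq> f ` Y" using Y(3) \<open>f ` ?S = S'\<close> by blast
    ultimately show "\<exists>Y'. proper_flat (f ` X) ((`) f ` B) Y' \<and> S' \<subseteq> Y'"
      using is_flat_image[OF inj p Y(1)] unfolding proper_flat_def by blast
  qed
qed

lemma pbd_dimension_image:
  "inj_on f X \<Longrightarrow> pbd X B K \<Longrightarrow> pbd_dimension (f ` X) ((`) f ` B) = pbd_dimension X B"
  unfolding pbd_dimension_def by (simp add: dim_prop_image card_image)

section \<open>Inflating a design by a finite field\<close>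

lemma affine_interpolation:
  fixes p q s t :: "'f::field"
  assumes "p \<noteq> q"
  obtains a b where "s = a + p * b" "t = a + q * b"
proof
  define b where "b = (s - t) / (p - q)"
  have "(p - q) * b = s - t" using assms by (simp add: b_def)
  then show "s = (s - p * b) + p * b" "t = (s - p * b) + q * b" by (simp_all add: algebra_simps)
qed

lemma affine_interpolation_unique:
  fixes p q a b a' b' :: "'f::field"
  assumes "p \<noteq> q" "a + p * b = a' + p * b'" "a + q * b = a' + q * b'"
  shows "a = a' \<and> b = b'"
proof -
  have "(p - q) * (b - b') = (a + p * b - (a' + p * b')) - (a + q * b - (a' + q * b'))"
    by (simp add: algebra_simps)
  also have "\<dots> = 0" using assms(2,3) by simp
  finally have "b = b'" using assms(1) by simp
  then show ?thesis using assms(2) by simp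
qed

text \<open>
  Every point P of the base design becomes the fibre {P} \<times> F, and every block l the \<open>|F|\<^sup>2\<close>
  graphs of the affine maps \<open>x \<mapsto> a + x b\<close>, read on l through \<open>labelling l\<close>.  The labelling is
  only meaningful (injective) for blocks with at most \<open>|F|\<close> points.
\<close>

definition fibre :: "'a \<Rightarrow> ('a \<times> 'f) set" where
  "fibre P = {P} \<times> UNIV"

definition labelling :: "'a set \<Rightarrow> 'a \<Rightarrow> 'f" where
  "labelling l = (SOME f. inj_on f l)"

definition graph_block :: "'a set \<Rightarrow> 'f::field \<Rightarrow> 'f \<Rightarrow> ('a \<times> 'f) set" where
  "graph_block l a b = (\<lambda>P. (P, a + labelling l P * b)) ` l"

definition inflation_blocks :: "'a set \<Rightarrow> 'a set set \<Rightarrow> ('a \<times> 'f::field) set set" where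
  "inflation_blocks D L = fibre ` D \<union> {graph_block l a b | l a b. l \<in> L}"

lemma mem_fibre [simp]: "(P, s) \<in> fibre Q \<longleftrightarrow> P = Q"
  by (simp add: fibre_def)

lemma mem_graph_block: "(P, s) \<in> graph_block l a b \<longleftrightarrow> P \<in> l \<and> s = a + labelling l P * b"
  by (auto simp: graph_block_def)

lemma card_fibre: "card (fibre P :: ('a \<times> 'f::finite) set) = CARD('f)"
  by (simp add: fibre_def card_cartesian_product)

lemma card_graph_block: "card (graph_block l a b) = card l"
  unfolding graph_block_def by (rule card_image) (auto simp: inj_on_def)

lemma inj_on_labelling:
  assumes "finite l" "card l \<le> CARD('f)"
  shows "inj_on (labelling l :: 'a \<Rightarrow> 'f::finite) l"
proof -
  have "\<exists>f :: 'a \<Rightarrow> 'f. inj_on f l"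
    using card_le_inj[of l "UNIV :: 'f set"] assms by auto
  then show ?thesis unfolding labelling_def by (rule someI_ex)
qed

lemma graph_block_through:
  assumes "inj_on (labelling l :: 'a \<Rightarrow> 'f::field) l" "P \<in> l" "Q \<in> l" "P \<noteq> Q"
  obtains a c where "(P, s) \<in> graph_block l a c" "(Q, t :: 'f) \<in> graph_block l a c"
proof -
  have "(labelling l P :: 'f) \<noteq> labelling l Q" using assms by (simp add: inj_on_eq_iff)
  then obtain a c where "s = a + labelling l P * c" "t = a + labelling l Q * c"
    by (rule affine_interpolation)
  then show thesis using that[of a c] assms(2,3) by (simp add: mem_graph_block)
qed

lemma graph_block_params_unique:
  assumes "inj_on (labelling l :: 'a \<Rightarrow> 'f::field) l" "P \<in> l" "Q \<in> l" "P \<noteq> Q"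
    "(P, s :: 'f) \<in> graph_block l a c" "(Q, t) \<in> graph_block l a c"
    "(P, s) \<in> graph_block l a' c'" "(Q, t) \<in> graph_block l a' c'"
  shows "a = a' \<and> c = c'"
proof -
  have "(labelling l P :: 'f) \<noteq> labelling l Q" using assms(1-4) by (simp add: inj_on_eq_iff)
  moreover have "a + labelling l P * c = a' + labelling l P * c'"
    "a + labelling l Q * c = a' + labelling l Q * c'"
    using assms(5-8) by (simp_all add: mem_graph_block)
  ultimately show ?thesis by (rule affine_interpolation_unique)
qed

lemma inflation_blocksE:
  assumes "b \<in> inflation_blocks D L"
  obtains P where "P \<in> D" "b = fibre P" | l a c where "l \<in> L" "b = graph_block l a c"
  using assms unfolding inflation_blocks_def by blast

context
  fixes D :: "'a set" and L :: "'a set set" and K :: "nat set"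
  assumes base: "pbd D L K" and small_blocks: "\<forall>l\<in>L. card l \<le> CARD('f::{field,finite})"
begin

lemma inj_on_labelling_block:
  assumes "l \<in> L"
  shows "inj_on (labelling l :: 'a \<Rightarrow> 'f) l"
proof (rule inj_on_labelling)
  have "finite D" using base by (simp add: pbd_def)
  then show "finite l" using pbd_block_subset[OF base assms] by (rule finite_subset[rotated])
  show "card l \<le> CARD('f)" using small_blocks assms by blast
qed

lemma inflation_unique_block:
  assumes "(P, s) \<in> D \<times> UNIV" "(Q, t) \<in> D \<times> UNIV" "(P, s) \<noteq> (Q, t :: 'f)"
  shows "\<exists>!b. b \<in> inflation_blocks D L \<and> (P, s) \<in> b \<and> (Q, t) \<in> b"
proof (cases "P = Q")
  case True
  then have "s \<noteq> t" using assms(3) by simp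
  show ?thesis
  proof (rule ex1I[of _ "fibre P"])
    show "fibre P \<in> inflation_blocks D L \<and> (P, s) \<in> fibre P \<and> (Q, t) \<in> fibre P"
      using assms(1) True by (auto simp: inflation_blocks_def)
    fix b assume b: "b \<in> inflation_blocks D L \<and> (P, s) \<in> b \<and> (Q, t) \<in> b"
    then show "b = fibre P"
    proof (elim conjE inflation_blocksE)
      fix l a c assume "b = graph_block l a c" "(P, s) \<in> b" "(Q, t) \<in> b"
      then show ?thesis using True \<open>s \<noteq> t\<close> by (simp add: mem_graph_block)
    qed simp
  qed
next
  case False
  obtain l where l: "l \<in> L" "P \<in> l" "Q \<in> l"
    and l_unique: "\<And>l'. l' \<in> L \<Longrightarrow> P \<in> l' \<Longrightarrow> Q \<in> l' \<Longrightarrow> l' = l"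
    using pbd_unique_block[OF base _ _ False] assms(1,2) by blast
  have inj: "inj_on (labelling l :: 'a \<Rightarrow> 'f) l" by (rule inj_on_labelling_block[OF l(1)])
  obtain a c where ac: "(P, s) \<in> graph_block l a c" "(Q, t) \<in> graph_block l a c"
    by (rule graph_block_through[OF inj l(2,3) False])
  show ?thesis
  proof (rule ex1I[of _ "graph_block l a c"])
    show "graph_block l a c \<in> inflation_blocks D L \<and> (P, s) \<in> graph_block l a c \<and> (Q, t) \<in> graph_block l a c"
      using l ac by (auto simp: inflation_blocks_def)
    fix b assume b: "b \<in> inflation_blocks D L \<and> (P, s) \<in> b \<and> (Q, t) \<in> b"
    then show "b = graph_block l a c"
    proof (elim conjE inflation_blocksE)
      fix l' a' c' assume b': "l' \<in> L" "b = graph_block l' a' c'" "(P, s) \<in> b" "(Q, t) \<in> b"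
      then have "l' = l" using l_unique by (simp add: mem_graph_block)
      with b' have "a = a' \<and> c = c'" using graph_block_params_unique[OF inj l(2,3) False ac] by simp
      with b'(2) \<open>l' = l\<close> show ?thesis by simp
    next
      fix P' assume "b = fibre P'" "(P, s) \<in> b" "(Q, t) \<in> b"
      then show ?thesis using False by simp
    qed
  qed
qed

theorem pbd_inflation:
  "pbd (D \<times> UNIV) (inflation_blocks D L :: ('a \<times> 'f) set set) (insert CARD('f) K)"
  unfolding pbd_def
proof (intro conjI ballI impI)
  show "finite (D \<times> (UNIV :: 'f set))" using base by (simp add: pbd_def)
  have "card {0, 1 :: 'f} \<le> CARD('f)" by (rule card_mono) simp_all
  then show "insert CARD('f) K \<subseteq> {2..}" using base by (simp add: pbd_def)
next
  fix b :: "('a \<times> 'f) set" assume "b \<in> inflation_blocks D L"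
  then have "b \<subseteq> D \<times> UNIV \<and> card b \<in> insert CARD('f) K"
  proof (cases rule: inflation_blocksE)
    case (1 P)
    then show ?thesis by (auto simp: card_fibre fibre_def)
  next
    case (2 l a c)
    have "card b \<in> K" using base 2 by (simp add: card_graph_block pbd_def)
    moreover have "b \<subseteq> D \<times> UNIV"
      using pbd_block_subset[OF base 2(1)] 2(2) by (auto simp: graph_block_def)
    ultimately show ?thesis by simp
  qed
  then show "b \<subseteq> D \<times> UNIV" "card b \<in> insert CARD('f) K" by simp_all
next
  fix x y :: "'a \<times> 'f" assume "x \<in> D \<times> UNIV" "y \<in> D \<times> UNIV" "x \<noteq> y"
  then show "\<exists>!b. b \<in> inflation_blocks D L \<and> x \<in> b \<and> y \<in> b"
    using inflation_unique_block[of "fst x" "snd x" "fst y" "snd y"] by simp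
qed

lemma is_flat_inflation_Times:
  assumes "is_flat D L Z"
  shows "is_flat (D \<times> UNIV) (inflation_blocks D L) (Z \<times> (UNIV :: 'f set))"
proof (rule is_flatI[OF pbd_inflation])
  show "Z \<times> UNIV \<subseteq> D \<times> UNIV" using is_flat_subset[OF assms] by blast
  fix x y :: "'a \<times> 'f" and b
  assume xy: "x \<in> Z \<times> UNIV" "y \<in> Z \<times> UNIV" "x \<noteq> y" "b \<in> inflation_blocks D L" "x \<in> b" "y \<in> b"
  from xy(4) show "b \<subseteq> Z \<times> UNIV"
  proof (cases rule: inflation_blocksE)
    case (2 l a c)
    then have "fst x \<in> l" "fst y \<in> l" "fst x \<noteq> fst y"
      using xy(3,5,6) by (cases x, cases y, auto simp: mem_graph_block)+
    moreover have "fst x \<in> Z" "fst y \<in> Z" using xy(1,2) by auto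
    ultimately have "l \<subseteq> Z" using is_flat_block_subset[OF base assms _ _ _ 2(1)] by blast
    then show ?thesis using 2 by (auto simp: graph_block_def)
  qed (use xy in \<open>auto simp: fibre_def\<close>)
qed

context
  fixes Y :: "('a \<times> 'f) set"
  assumes flat: "is_flat (D \<times> UNIV) (inflation_blocks D L) Y"
begin

lemma inflation_flat_block_subset:
  "b \<in> inflation_blocks D L \<Longrightarrow> u \<in> Y \<Longrightarrow> w \<in> Y \<Longrightarrow> u \<noteq> w \<Longrightarrow> u \<in> b \<Longrightarrow> w \<in> b \<Longrightarrow> b \<subseteq> Y"
  using is_flat_block_subset[OF pbd_inflation flat] by blast

lemma graph_block_subset_flat:
  assumes "l \<in> L" "P \<in> l" "Q \<in> l" "P \<noteq> Q" "(P, s) \<in> Y" "(Q, t) \<in> Y"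
    "(P, s) \<in> graph_block l a c" "(Q, t) \<in> graph_block l a c"
  shows "graph_block l a c \<subseteq> Y"
  using inflation_flat_block_subset[of "graph_block l a c" "(P, s)" "(Q, t)"] assms
  by (auto simp: inflation_blocks_def)

lemma flat_level_closed:
  assumes "l \<in> L" "P \<in> l" "Q \<in> l" "R \<in> l" "P \<noteq> Q" "(P, c) \<in> Y" "(Q, c) \<in> Y"
  shows "(R, c) \<in> Y"
  using graph_block_subset_flat[OF assms(1-3,5-7), of c 0] assms(2-4) by (auto simp: mem_graph_block)

lemma fibre_subset_flat:
  assumes "P \<in> D" "(P, s) \<in> Y" "(P, t) \<in> Y" "s \<noteq> t"
  shows "fibre P \<subseteq> Y"
  using inflation_flat_block_subset[of "fibre P" "(P, s)" "(P, t)"] assms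
  by (auto simp: inflation_blocks_def)

lemma flat_new_level:
  assumes "l \<in> L" "P \<in> l" "Q \<in> l" "R \<in> l" "P \<noteq> Q" "R \<noteq> P" "R \<noteq> Q"
    "(P, s) \<in> Y" "(Q, t) \<in> Y" "s \<noteq> t"
  shows "\<exists>v. (R, v) \<in> Y \<and> v \<noteq> s \<and> v \<noteq> t"
proof -
  have inj: "inj_on (labelling l :: 'a \<Rightarrow> 'f) l" by (rule inj_on_labelling_block[OF assms(1)])
  obtain a c where ac: "(P, s) \<in> graph_block l a c" "(Q, t) \<in> graph_block l a c"
    by (rule graph_block_through[OF inj assms(2,3,5)])
  then have s: "s = a + labelling l P * c" and t: "t = a + labelling l Q * c"
    by (simp_all add: mem_graph_block)
  with assms(10) have "c \<noteq> 0" by auto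
  moreover have "(labelling l R :: 'f) \<noteq> labelling l P" "(labelling l R :: 'f) \<noteq> labelling l Q"
    using inj assms(2-4,6,7) by (simp_all add: inj_on_eq_iff)
  ultimately have "a + labelling l R * c \<noteq> s" "a + labelling l R * c \<noteq> t"
    unfolding s t by simp_all
  moreover have "(R, a + labelling l R * c) \<in> Y"
    using graph_block_subset_flat[OF assms(1-3,5,8,9) ac] assms(4) by (simp add: subset_iff mem_graph_block)
  ultimately show ?thesis by blast
qed

lemma fibre_spread:
  assumes "l \<in> L" "P \<in> l" "Q \<in> l" "R \<in> l" "P \<noteq> Q" "R \<noteq> Q"
    "fibre P \<subseteq> Y" "(Q, t) \<in> Y"
  shows "fibre R \<subseteq> Y"
proof
  fix x :: "'a \<times> 'f" assume "x \<in> fibre R"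
  then obtain v where x: "x = (R, v)" by (cases x) simp
  obtain a c where ac: "(Q, t) \<in> graph_block l a c" "(R, v) \<in> graph_block l a c"
    by (rule graph_block_through[OF inj_on_labelling_block[OF assms(1)] assms(3,4) assms(6)[symmetric]])
  let ?p = "(P, a + labelling l P * c)"
  have p_block: "?p \<in> graph_block l a c" using assms(2) by (simp add: mem_graph_block)
  have "?p \<in> fibre P" by simp
  then have p_Y: "?p \<in> Y" using assms(7) by blast
  have "graph_block l a c \<subseteq> Y"
    by (rule graph_block_subset_flat[OF assms(1-3,5) p_Y assms(8) p_block ac(1)])
  then show "x \<in> Y" using ac(2) x by blast
qed

lemma fibre_spread_line:
  assumes three: "\<forall>l\<in>L. 3 \<le> card l"
    and "l \<in> L" "P \<in> l" "Q \<in> l" "R \<in> l" "P \<noteq> Q" "fibre P \<subseteq> Y" "(Q, t) \<in> Y"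
  shows "fibre R \<subseteq> Y"
proof (cases "R = Q")
  case True
  have "\<not> l \<subseteq> {P, Q}"
  proof
    assume "l \<subseteq> {P, Q}"
    then have "card l \<le> card {P, Q}" by (intro card_mono) auto
    moreover have "card {P, Q} \<le> 2" by (cases "P = Q") simp_all
    ultimately show False using three assms(2) by fastforce
  qed
  then obtain R' where R': "R' \<in> l" "R' \<noteq> P" "R' \<noteq> Q" by blast
  have "fibre R' \<subseteq> Y" using fibre_spread[OF assms(2-4) R'(1) assms(6) R'(3) assms(7,8)] .
  moreover have "(P, 0) \<in> Y" using assms(7) by (auto simp: fibre_def)
  ultimately show ?thesis
    using fibre_spread[OF assms(2) R'(1) assms(3,5) R'(2)] True assms(6) by blast
next
  case False
  show ?thesis by (rule fibre_spread[OF assms(2-6) False assms(7,8)])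
qed

lemma is_flat_full_fibres:
  assumes "\<forall>l\<in>L. 3 \<le> card l"
  shows "is_flat D L {P \<in> D. fibre P \<subseteq> Y}"
proof (rule is_flatI[OF base])
  fix P Q l
  assume h: "P \<in> {P \<in> D. fibre P \<subseteq> Y}" "Q \<in> {P \<in> D. fibre P \<subseteq> Y}" "P \<noteq> Q"
    "l \<in> L" "P \<in> l" "Q \<in> l"
  have "(Q, 0) \<in> Y" using h(2) by (auto simp: fibre_def)
  then show "l \<subseteq> {P \<in> D. fibre P \<subseteq> Y}"
    using fibre_spread_line[OF assms h(4-5,6) _ h(3)] h(1) pbd_block_subset[OF base h(4)] by blast
qed blast

end

end

section \<open>A PBD(31, {3,4}) inside PG(3,3)\<close>

datatype F3 = Z3 | O3 | T3

instantiation F3 :: field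
begin
definition "zero_F3 = Z3"
definition "one_F3 = O3"
definition "plus_F3 a b = (case a of Z3 \<Rightarrow> b | O3 \<Rightarrow> (case b of Z3 \<Rightarrow> O3 | O3 \<Rightarrow> T3 | T3 \<Rightarrow> Z3)
   | T3 \<Rightarrow> (case b of Z3 \<Rightarrow> T3 | O3 \<Rightarrow> Z3 | T3 \<Rightarrow> O3))"
definition "uminus_F3 a = (case a of Z3 \<Rightarrow> Z3 | O3 \<Rightarrow> T3 | T3 \<Rightarrow> O3)"
definition "minus_F3 (a::F3) b = a + - b"
definition "times_F3 a b = (case a of Z3 \<Rightarrow> Z3 | O3 \<Rightarrow> b | T3 \<Rightarrow> - b)"
definition "inverse_F3 (a::F3) = a"
definition "divide_F3 (a::F3) b = a * inverse b"
instance
  by standard (auto simp: zero_F3_def one_F3_def plus_F3_def uminus_F3_def minus_F3_def times_F3_def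
      inverse_F3_def divide_F3_def split: F3.splits)
end

lemma UNIV_F3: "(UNIV :: F3 set) = {0, 1, T3}"
  by (auto simp: zero_F3_def one_F3_def intro: F3.exhaust)

instance F3 :: finite
  by standard (simp add: UNIV_F3)

lemma F3_simps [simp]:
  "Z3 = 0" "O3 = 1" "(1::F3) + 1 = T3" "T3 + T3 = 1" "1 + T3 = 0" "T3 + 1 = 0"
  "T3 * T3 = 1" "-(1::F3) = T3" "- T3 = 1" "T3 \<noteq> 0" "T3 \<noteq> 1" "(2::F3) = T3"
  by (simp_all add: one_add_one[symmetric] zero_F3_def one_F3_def plus_F3_def times_F3_def uminus_F3_def)

lemma F3_cases: "(x::F3) = 0 \<or> x = 1 \<or> x = T3"
  by (cases x) auto

lemma ex_F3: "(\<exists>x::F3. P x) \<longleftrightarrow> P 0 \<or> P 1 \<or> P T3"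
  using F3_cases by metis

type_synonym V = "F3^4"

definition vec4 :: "F3 \<Rightarrow> F3 \<Rightarrow> F3 \<Rightarrow> F3 \<Rightarrow> V" where
  "vec4 a b c d = (\<chi> i. if i = 1 then a else if i = 2 then b else if i = 3 then c else d)"

lemma vec4_nth [simp]:
  "vec4 a b c d $ 1 = a" "vec4 a b c d $ 2 = b" "vec4 a b c d $ 3 = c" "vec4 a b c d $ 4 = d"
  by (simp_all add: vec4_def)

lemma V_eq_iff: "(x::V) = y \<longleftrightarrow> x$1 = y$1 \<and> x$2 = y$2 \<and> x$3 = y$3 \<and> x$4 = y$4"
  by (simp add: vec_eq_iff forall_4)

text \<open>
  Points of PG(3,3) are represented by normalised vectors: the affine points have last
  coordinate 1, and \<open>inf_line\<close> lists one representative of each point of the line \<open>x\<^sub>3 = x\<^sub>4 = 0\<close>.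
  A block is the set of chosen representatives on a projective line.
\<close>

definition inf_line :: "V set" where
  "inf_line = {vec4 1 0 0 0, vec4 0 1 0 0, vec4 1 1 0 0, vec4 1 T3 0 0}"

definition base_points :: "V set" where
  "base_points = {x. x$4 = 1} \<union> inf_line"

definition base_line :: "V \<Rightarrow> V \<Rightarrow> V set" where
  "base_line P Q = base_points \<inter> vec.span {P, Q}"

definition base_lines :: "V set set" where
  "base_lines = {base_line P Q | P Q. P \<in> base_points \<and> Q \<in> base_points \<and> P \<noteq> Q}"

lemma mem_inf_line: "x \<in> inf_line \<longleftrightarrow> x$3 = 0 \<and> x$4 = 0 \<and> (x$1 = 1 \<or> x$1 = 0 \<and> x$2 = 1)"
  unfolding inf_line_def using F3_cases[of "x$2"] by (auto simp: V_eq_iff)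

lemma mem_base_points:
  "x \<in> base_points \<longleftrightarrow> x$4 = 1 \<or> x$3 = 0 \<and> x$4 = 0 \<and> (x$1 = 1 \<or> x$1 = 0 \<and> x$2 = 1)"
  by (auto simp: base_points_def mem_inf_line)

lemma mem_span_pair: "x \<in> vec.span {P, Q} \<longleftrightarrow> (\<exists>a b. x = a *s P + b *s Q)"
  by (auto simp: vec.span_insert vec.span_singleton algebra_simps)

lemma mem_base_line: "x \<in> base_line P Q \<longleftrightarrow> x \<in> base_points \<and> (\<exists>a b. x = a *s P + b *s Q)"
  by (simp add: base_line_def mem_span_pair)

lemma base_line_commute: "base_line P Q = base_line Q P"
  by (simp add: base_line_def insert_commute)

lemma base_line_subset: "base_line P Q \<subseteq> base_points"
  by (simp add: base_line_def)

lemma ends_mem_base_line: "P \<in> base_points \<Longrightarrow> Q \<in> base_points \<Longrightarrow> P \<in> base_line P Q \<and> Q \<in> base_line P Q"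
  by (simp add: base_line_def vec.span_base)

lemma base_point_nonzero: "P \<in> base_points \<Longrightarrow> P \<noteq> 0"
  by (auto simp: mem_base_points)

lemma base_points_not_proportional:
  "P \<in> base_points \<Longrightarrow> Q \<in> base_points \<Longrightarrow> P \<noteq> Q \<Longrightarrow> Q \<noteq> k *s P"
  using F3_cases[of k] by (auto simp: mem_base_points V_eq_iff)

lemma base_line_explicit:
  "base_line P Q = base_points \<inter>
     {0, P, T3 *s P, Q, T3 *s Q, P + Q, P + T3 *s Q, T3 *s P + Q, T3 *s P + T3 *s Q}"
  unfolding mem_base_line set_eq_iff
  by (simp add: ex_F3 del: F3_simps) (auto simp: eq_commute)

lemma neg_inf_point_notin_base_points: "u \<in> base_points \<Longrightarrow> u$4 = 0 \<Longrightarrow> T3 *s u \<notin> base_points"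
  by (auto simp: mem_base_points)

lemma base_line_affine_affine:
  assumes "P$4 = 1" "Q$4 = 1"
  shows "base_line P Q = {P, Q, T3 *s P + T3 *s Q} \<union> (base_points \<inter> {P + T3 *s Q, T3 *s P + Q})"
  using assms unfolding base_line_explicit by (auto simp: mem_base_points)

lemma base_line_affine_inf:
  assumes "P$4 = 1" "Q \<in> base_points" "Q$4 = 0"
  shows "base_line P Q = {P, Q, P + Q, P + T3 *s Q}"
  using assms neg_inf_point_notin_base_points[of Q] unfolding base_line_explicit
  by (auto simp: mem_base_points)

lemma cramer_2x2:
  fixes p1 p2 q1 q2 x1 x2 :: "'a::field"
  assumes "p1 * q2 - p2 * q1 \<noteq> 0"
  shows "(x1 * q2 - x2 * q1) / (p1 * q2 - p2 * q1) * p1 + (p1 * x2 - p2 * x1) / (p1 * q2 - p2 * q1) * q1 = x1"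
    and "(x1 * q2 - x2 * q1) / (p1 * q2 - p2 * q1) * p2 + (p1 * x2 - p2 * x1) / (p1 * q2 - p2 * q1) * q2 = x2"
proof -
  let ?d = "p1 * q2 - p2 * q1"
  have "(x1 * q2 - x2 * q1) * p1 + (p1 * x2 - p2 * x1) * q1 = x1 * ?d"
    "(x1 * q2 - x2 * q1) * p2 + (p1 * x2 - p2 * x1) * q2 = x2 * ?d"
    by algebra+
  then show "(x1 * q2 - x2 * q1) / ?d * p1 + (p1 * x2 - p2 * x1) / ?d * q1 = x1"
    "(x1 * q2 - x2 * q1) / ?d * p2 + (p1 * x2 - p2 * x1) / ?d * q2 = x2"
    using assms by (simp_all add: add_divide_distrib[symmetric])
qed

lemma base_line_inf_inf:
  assumes "P \<in> inf_line" "Q \<in> inf_line" "P \<noteq> Q"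
  shows "base_line P Q = inf_line"
proof
  show "base_line P Q \<subseteq> inf_line"
    using assms unfolding base_line_explicit by (auto simp: base_points_def mem_inf_line)
  show "inf_line \<subseteq> base_line P Q"
  proof
    fix x assume x: "x \<in> inf_line"
    let ?d = "P$1 * Q$2 - P$2 * Q$1"
    have "?d \<noteq> 0" using assms unfolding inf_line_def by (auto simp: V_eq_iff)
    then have "x = ((x$1 * Q$2 - x$2 * Q$1) / ?d) *s P + ((P$1 * x$2 - P$2 * x$1) / ?d) *s Q"
      using x assms cramer_2x2[of "P$1" "Q$2" "P$2" "Q$1" "x$1" "x$2"] by (simp add: V_eq_iff mem_inf_line)
    then show "x \<in> base_line P Q" using x unfolding mem_base_line base_points_def by blast
  qed
qed

lemma card_inf_line: "card inf_line = 4"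
  unfolding inf_line_def by (simp add: V_eq_iff)

lemma card_base_line_affine_inf:
  assumes "P$4 = 1" "Q \<in> base_points" "Q$4 = 0"
  shows "card (base_line P Q) = 4"
proof -
  have "Q \<noteq> 0" using assms(2) base_point_nonzero by blast
  then have "P + Q \<noteq> P + T3 *s Q" "P \<noteq> P + Q" "P \<noteq> P + T3 *s Q"
    by (auto simp: vec_eq_iff)
  moreover have "Q \<noteq> P" "Q \<noteq> P + Q" "Q \<noteq> P + T3 *s Q" using assms by (auto simp: V_eq_iff)
  ultimately show ?thesis unfolding base_line_affine_inf[OF assms] by simp
qed

lemma third_point_eq_iff: "T3 *s P + T3 *s Q = P \<longleftrightarrow> Q = P" "T3 *s P + T3 *s Q = Q \<longleftrightarrow> Q = P"
proof -
  have "T3 * p + T3 * q = p \<longleftrightarrow> q = p" "T3 * p + T3 * q = q \<longleftrightarrow> q = p" for p q :: F3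
    using F3_cases[of p] F3_cases[of q] by auto
  then show "T3 *s P + T3 *s Q = P \<longleftrightarrow> Q = P" "T3 *s P + T3 *s Q = Q \<longleftrightarrow> Q = P"
    by (simp_all add: vec_eq_iff)
qed

lemma card_base_line_affine_affine:
  assumes "P$4 = 1" "Q$4 = 1" "P \<noteq> Q"
  shows "card (base_line P Q) \<in> {3, 4}"
proof -
  let ?M = "T3 *s P + T3 *s Q" and ?u = "P + T3 *s Q" and ?v = "T3 *s P + Q"
  have neq_if_level: "x$4 \<noteq> y$4 \<Longrightarrow> x \<noteq> y" for x y :: V by auto
  \<comment> \<open>\<open>?u\<close> and \<open>?v\<close> represent the same point at infinity, so at most one is in \<open>base_points\<close>\<close>
  have "?v = T3 *s ?u" by (simp add: vec_eq_iff algebra_simps)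
  then have not_both: "\<not> (?u \<in> base_points \<and> ?v \<in> base_points)"
    using neg_inf_point_notin_base_points[of ?u] assms(1,2) by auto
  have M: "?M \<noteq> P" "?M \<noteq> Q"
    using assms(3) third_point_eq_iff[of P Q] by simp_all
  have u: "?u \<noteq> P" "?u \<noteq> Q" "?u \<noteq> ?M"
    by (rule neq_if_level, simp add: assms(1,2))+
  have v: "?v \<noteq> P" "?v \<noteq> Q" "?v \<noteq> ?M"
    by (rule neq_if_level, simp add: assms(1,2))+
  have line: "base_line P Q = {P, Q, ?M} \<union> (base_points \<inter> {?u, ?v})"
    by (rule base_line_affine_affine[OF assms(1,2)])
  show ?thesis
  proof (cases "?u \<in> base_points")
    case True
    then have "base_line P Q = {?u, P, Q, ?M}" using line not_both by auto
    then show ?thesis using u M assms(3) by simp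
  next
    case u_out: False
    show ?thesis
    proof (cases "?v \<in> base_points")
      case True
      then have "base_line P Q = {?v, P, Q, ?M}" using line u_out by auto
      then show ?thesis using v M assms(3) by simp
    next
      case False
      then have "base_line P Q = {P, Q, ?M}" using line u_out by auto
      then show ?thesis using M assms(3) by simp
    qed
  qed
qed

lemma card_base_line:
  assumes "P \<in> base_points" "Q \<in> base_points" "P \<noteq> Q"
  shows "card (base_line P Q) \<in> {3, 4}"
proof -
  consider "P$4 = 1" "Q$4 = 1" | "P$4 = 1" "Q$4 = 0" | "P$4 = 0" "Q$4 = 1" | "P$4 = 0" "Q$4 = 0"
    using assms by (auto simp: mem_base_points)
  then show ?thesis
  proof cases
    case 1
    then show ?thesis using card_base_line_affine_affine assms(3) by blast
  next
    case 2
    then show ?thesis using card_base_line_affine_inf assms(2) by simp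
  next
    case 3
    then show ?thesis using card_base_line_affine_inf[of Q P] assms(1) base_line_commute by simp
  next
    case 4
    then have "P \<in> inf_line" "Q \<in> inf_line" using assms(1,2) by (auto simp: base_points_def)
    then show ?thesis using base_line_inf_inf assms(3) card_inf_line by simp
  qed
qed

lemma independent_base_pair:
  assumes "P \<in> base_points" "Q \<in> base_points" "P \<noteq> Q"
  shows "vec.independent {P, Q}"
proof -
  have "vec.independent {Q}" using base_point_nonzero[OF assms(2)] by (simp add: vec.independent_insert)
  moreover have "P \<notin> vec.span {Q}"
    using base_points_not_proportional[OF assms(2,1)] assms(3) by (auto simp: vec.span_singleton)
  ultimately show ?thesis using assms(3) by (simp add: vec.independent_insert)
qed

lemma base_line_unique:
  assumes "P \<in> base_points" "Q \<in> base_points" "P \<noteq> Q" "P \<in> base_line R S" "Q \<in> base_line R S"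
  shows "base_line R S = base_line P Q"
proof -
  have "vec.span {P, Q} \<subseteq> vec.span {R, S}"
    using assms(4,5) by (intro vec.span_minimal) (auto simp: base_line_def)
  moreover have "card {R, S} \<le> 2" by (cases "R = S") simp_all
  then have "vec.dim (vec.span {R, S}) \<le> 2"
    using vec.dim_le_card[of "vec.span {R, S}" "{R, S}"] by (simp add: vec.span_span)
  moreover have "vec.dim (vec.span {P, Q}) = 2"
    using vec.dim_span_eq_card_independent[OF independent_base_pair[OF assms(1-3)]] assms(3) by simp
  ultimately have "vec.span {P, Q} = vec.span {R, S}"
    by (intro vec.subspace_dim_equal) auto
  then show ?thesis by (simp add: base_line_def)
qed

lemma card_affine_points: "card {x::V. x$4 = 1} = 27"
proof -
  have "{x::V. x$4 = 1} = (\<lambda>(a, b, c). vec4 a b c 1) ` UNIV"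
  proof (rule set_eqI)
    fix x :: V
    show "x \<in> {x. x$4 = 1} \<longleftrightarrow> x \<in> (\<lambda>(a, b, c). vec4 a b c 1) ` UNIV"
    proof
      assume "x \<in> {x. x$4 = 1}"
      then have "x = (\<lambda>(a, b, c). vec4 a b c 1) (x$1, x$2, x$3)" by (simp add: V_eq_iff)
      then show "x \<in> (\<lambda>(a, b, c). vec4 a b c 1) ` UNIV" by (rule image_eqI) simp
    qed auto
  qed
  moreover have "inj (\<lambda>(a, b, c). vec4 a b c (1::F3))"
    by (auto simp: inj_def V_eq_iff)
  moreover have "CARD(F3) = 3" by (simp add: UNIV_F3)
  ultimately show ?thesis by (simp add: card_image)
qed

lemma card_base_points: "card base_points = 31"
proof -
  have "{x::V. x$4 = 1} \<inter> inf_line = {}" by (auto simp: mem_inf_line)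
  then show ?thesis
    unfolding base_points_def using card_affine_points card_inf_line by (simp add: card_Un_disjoint)
qed

lemma base_lines_subset: "l \<in> base_lines \<Longrightarrow> l \<subseteq> base_points"
  unfolding base_lines_def using base_line_subset by blast

lemma base_lines_eq: "l \<in> base_lines \<Longrightarrow> P \<in> l \<Longrightarrow> Q \<in> l \<Longrightarrow> P \<noteq> Q \<Longrightarrow> l = base_line P Q"
  unfolding base_lines_def using base_line_unique base_line_subset by blast

lemma base_line_mem_base_lines:
  "P \<in> base_points \<Longrightarrow> Q \<in> base_points \<Longrightarrow> P \<noteq> Q \<Longrightarrow> base_line P Q \<in> base_lines"
  unfolding base_lines_def by blast

theorem pbd_base: "pbd base_points base_lines {3, 4}"
  unfolding pbd_def
proof (intro conjI ballI impI)
  show "finite base_points" by simp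
  fix l assume "l \<in> base_lines"
  then show "l \<subseteq> base_points" "card l \<in> {3, 4}"
    using base_lines_subset card_base_line unfolding base_lines_def by blast+
next
  fix P Q assume PQ: "P \<in> base_points" "Q \<in> base_points" "P \<noteq> Q"
  show "\<exists>!l. l \<in> base_lines \<and> P \<in> l \<and> Q \<in> l"
  proof (rule ex1I[of _ "base_line P Q"])
    show "base_line P Q \<in> base_lines \<and> P \<in> base_line P Q \<and> Q \<in> base_line P Q"
      using PQ base_line_mem_base_lines ends_mem_base_line by blast
  qed (use PQ base_lines_eq in blast)
qed simp

text \<open>
  \<open>O0, A1, A2, A3\<close> is an affine frame; \<open>E1, E2, E12\<close> are the points at infinity of the lines
  \<open>O0 A1\<close>, \<open>O0 A2\<close>, \<open>A1 A2\<close>, and \<open>Q0, Q1, Q2\<close> the third points of the lines joining \<open>O0, A1, A2\<close>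
  to \<open>A3\<close>.
\<close>

definition O0 :: V where "O0 = vec4 0 0 0 1"
definition A1 :: V where "A1 = vec4 1 0 0 1"
definition A2 :: V where "A2 = vec4 0 1 0 1"
definition A3 :: V where "A3 = vec4 0 0 1 1"
definition E1 :: V where "E1 = vec4 1 0 0 0"
definition E2 :: V where "E2 = vec4 0 1 0 0"
definition E12 :: V where "E12 = vec4 1 T3 0 0"
definition Q0 :: V where "Q0 = vec4 0 0 T3 1"
definition Q1 :: V where "Q1 = vec4 T3 0 T3 1"
definition Q2 :: V where "Q2 = vec4 0 T3 T3 1"

lemmas special_points_def = O0_def A1_def A2_def A3_def E1_def E2_def E12_def Q0_def Q1_def Q2_def

lemma special_points_mem_base_points:
  "O0 \<in> base_points" "A1 \<in> base_points" "A2 \<in> base_points" "A3 \<in> base_points"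
  "E1 \<in> base_points" "E2 \<in> base_points" "E12 \<in> base_points"
  "Q0 \<in> base_points" "Q1 \<in> base_points" "Q2 \<in> base_points"
  by (simp_all add: mem_base_points special_points_def)

lemma span_eq_UNIV_if:
  assumes "E1 \<in> vec.span S" "E2 \<in> vec.span S" "O0 \<in> vec.span S" "A3 \<in> vec.span S"
  shows "vec.span S = UNIV"
proof -
  have "axis 1 1 = E1" "axis 2 1 = E2" "axis 4 1 = O0" "axis 3 1 = A3 - O0"
    by (simp_all add: V_eq_iff axis_def special_points_def)
  then have "\<forall>i::4. axis i 1 \<in> vec.span S"
    unfolding forall_4 using assms vec.span_diff by auto
  then have "cart_basis \<subseteq> vec.span S" by (auto simp: cart_basis_def)
  then have "vec.span cart_basis \<subseteq> vec.span S" using vec.span_minimal by blast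
  then show ?thesis by auto
qed

lemma plane_neq_base_points: "base_points \<inter> vec.span {P, Q, R} \<noteq> base_points"
proof
  assume "base_points \<inter> vec.span {P, Q, R} = base_points"
  then have "vec.span {P, Q, R} = UNIV"
    using special_points_mem_base_points by (intro span_eq_UNIV_if) auto
  then have "vec.dim (UNIV :: V set) \<le> card {P, Q, R}"
    using vec.dim_le_card[of "UNIV :: V set" "{P, Q, R}"] by simp
  moreover have "card {P, Q, R} \<le> 3" by (simp add: card_insert_if)
  ultimately show False by (simp add: card_cart_basis)
qed

lemma is_flat_plane: "is_flat base_points base_lines (base_points \<inter> vec.span {P, Q, R})"
proof (rule is_flatI[OF pbd_base])
  fix x y l assume xy: "x \<in> base_points \<inter> vec.span {P, Q, R}" "y \<in> base_points \<inter> vec.span {P, Q, R}"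
    "x \<noteq> y" "l \<in> base_lines" "x \<in> l" "y \<in> l"
  then have "l = base_line x y" using base_lines_eq by blast
  moreover have "vec.span {x, y} \<subseteq> vec.span {P, Q, R}"
    using xy(1,2) by (intro vec.span_minimal) auto
  ultimately show "l \<subseteq> base_points \<inter> vec.span {P, Q, R}" by (auto simp: base_line_def)
qed blast

lemma flat_third_point:
  assumes flat: "is_flat base_points base_lines Z" and "P \<in> Z" "Q \<in> Z" "P$4 = 1" "Q$4 = 1"
  shows "T3 *s P + T3 *s Q \<in> Z"
proof (cases "P = Q")
  case True
  have "T3 * p + T3 * p = p" for p :: F3 using F3_cases[of p] by auto
  then have "T3 *s P + T3 *s P = P" by (simp add: vec_eq_iff)
  then show ?thesis using True assms(2) by simp
next
  case False
  have PQ: "P \<in> base_points" "Q \<in> base_points" using assms(2,3) is_flat_subset[OF flat] by auto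
  have "base_line P Q \<subseteq> Z"
    using is_flat_block_subset[OF pbd_base flat assms(2,3) False base_line_mem_base_lines[OF PQ False]]
      ends_mem_base_line[OF PQ] by blast
  then show ?thesis using base_line_affine_affine[OF assms(4,5)] by auto
qed

lemma affine_points_subset_flat:
  assumes flat: "is_flat base_points base_lines Z" and "O0 \<in> Z" "A1 \<in> Z" "A2 \<in> Z" "A3 \<in> Z"
  shows "{x. x$4 = 1} \<subseteq> Z"
proof -
  \<comment> \<open>The third point on the line through \<open>O0 + u\<close> and \<open>O0 + w\<close> is \<open>O0 - u - w\<close>,
    so the translation vectors \<open>U\<close> form an \<open>F3\<close>-subspace.\<close>
  define U where "U = {u. u$4 = 0 \<and> O0 + u \<in> Z}"
  have third: "T3 *s u + T3 *s w \<in> U" if "u \<in> U" "w \<in> U" for u w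
  proof -
    have "T3 *s (O0 + u) + T3 *s (O0 + w) \<in> Z"
      using that by (intro flat_third_point[OF flat]) (auto simp: U_def O0_def)
    moreover have "T3 * (1 + p) + T3 * (1 + q) = 1 + (T3 * p + T3 * q)" for p q :: F3
      using F3_cases[of p] F3_cases[of q] by auto
    then have "T3 *s (O0 + u) + T3 *s (O0 + w) = O0 + (T3 *s u + T3 *s w)"
      using that by (simp add: vec_eq_iff forall_4 U_def O0_def)
    ultimately show ?thesis using that by (simp add: U_def)
  qed
  have zero: "0 \<in> U" using assms(2) by (simp add: U_def)
  have neg: "T3 *s u \<in> U" if "u \<in> U" for u
    using third[OF zero that] by simp
  have add: "u + w \<in> U" if "u \<in> U" "w \<in> U" for u w
  proof -
    have "T3 *s (T3 *s u) + T3 *s (T3 *s w) = u + w" by (simp add: vec_eq_iff algebra_simps)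
    then show ?thesis using third[OF neg[OF that(1)] neg[OF that(2)]] by simp
  qed
  have scale: "c *s u \<in> U" if "u \<in> U" for c u
    using F3_cases[of c] zero that neg by auto
  have "O0 + vec4 1 0 0 0 = A1" "O0 + vec4 0 1 0 0 = A2" "O0 + vec4 0 0 1 0 = A3"
    by (simp_all add: V_eq_iff special_points_def)
  then have units: "vec4 1 0 0 0 \<in> U" "vec4 0 1 0 0 \<in> U" "vec4 0 0 1 0 \<in> U"
    using assms(3-5) by (simp_all add: U_def)
  show ?thesis
  proof
    fix x :: V assume "x \<in> {x. x$4 = 1}"
    then have "x - O0 = (x$1) *s vec4 1 0 0 0 + (x$2) *s vec4 0 1 0 0 + (x$3) *s vec4 0 0 1 0"
      by (simp add: V_eq_iff O0_def)
    also have "\<dots> \<in> U" using add scale units by metis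
    finally show "x \<in> Z" by (simp add: U_def)
  qed
qed

lemma flat_eq_base_points:
  assumes flat: "is_flat base_points base_lines Z" and "O0 \<in> Z" "A1 \<in> Z" "A2 \<in> Z" "A3 \<in> Z"
  shows "Z = base_points"
proof
  show "Z \<subseteq> base_points" by (rule is_flat_subset[OF flat])
  have affine: "{x. x$4 = 1} \<subseteq> Z" by (rule affine_points_subset_flat[OF assms])
  show "base_points \<subseteq> Z"
  proof
    fix x assume x: "x \<in> base_points"
    show "x \<in> Z"
    proof (cases "x$4 = 1")
      case True
      then show ?thesis using affine by blast
    next
      case False
      \<comment> \<open>a point at infinity is the third point of the line through \<open>O0\<close> and \<open>O0 + x\<close>\<close>
      then have "x$4 = 0" using x by (auto simp: mem_base_points)
      then have ends: "O0 \<in> Z" "O0 + x \<in> Z" "O0 \<noteq> O0 + x"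
        using affine assms(2) base_point_nonzero[OF x] by (auto simp: O0_def)
      have "x = T3 *s O0 + 1 *s (O0 + x)"
        using F3_cases[of "x$1"] F3_cases[of "x$2"] F3_cases[of "x$3"] \<open>x$4 = 0\<close>
        by (simp add: V_eq_iff O0_def)
      then have "x \<in> base_line O0 (O0 + x)" unfolding mem_base_line using x by blast
      moreover have "base_line O0 (O0 + x) \<subseteq> Z"
        using ends is_flat_subset[OF flat] is_flat_block_subset[OF pbd_base flat ends(1,2,3)]
          base_line_mem_base_lines ends_mem_base_line by blast
      ultimately show ?thesis by blast
    qed
  qed
qed

lemma special_collinearities:
  "E1 \<in> base_line O0 A1" "E2 \<in> base_line O0 A2" "E12 \<in> base_line A1 A2"
  "Q0 \<in> base_line O0 A3" "Q1 \<in> base_line A1 A3" "Q2 \<in> base_line A2 A3"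
  "E1 \<in> base_line Q0 Q1" "E2 \<in> base_line Q0 Q2" "E12 \<in> base_line Q1 Q2"
  unfolding mem_base_line using special_points_mem_base_points
  by (simp_all add: ex_F3 V_eq_iff special_points_def)

lemma special_points_distinct:
  "O0 \<noteq> A1" "O0 \<noteq> A2" "A1 \<noteq> A2" "O0 \<noteq> A3" "A1 \<noteq> A3" "A2 \<noteq> A3"
  "Q0 \<noteq> O0" "Q0 \<noteq> A3" "Q1 \<noteq> A1" "Q1 \<noteq> A3" "Q2 \<noteq> A2" "Q2 \<noteq> A3"
  "Q0 \<noteq> Q1" "Q0 \<noteq> Q2" "Q1 \<noteq> Q2"
  by (simp_all add: V_eq_iff special_points_def)

section \<open>The inflated design on 124 points\<close>

datatype F4 = Z4 | O4 | W4 | V4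

instantiation F4 :: field
begin
definition "zero_F4 = Z4"
definition "one_F4 = O4"
definition "plus_F4 a b = (case a of Z4 \<Rightarrow> b
   | O4 \<Rightarrow> (case b of Z4 \<Rightarrow> O4 | O4 \<Rightarrow> Z4 | W4 \<Rightarrow> V4 | V4 \<Rightarrow> W4)
   | W4 \<Rightarrow> (case b of Z4 \<Rightarrow> W4 | O4 \<Rightarrow> V4 | W4 \<Rightarrow> Z4 | V4 \<Rightarrow> O4)
   | V4 \<Rightarrow> (case b of Z4 \<Rightarrow> V4 | O4 \<Rightarrow> W4 | W4 \<Rightarrow> O4 | V4 \<Rightarrow> Z4))"
definition "uminus_F4 (a::F4) = a"
definition "minus_F4 (a::F4) b = a + b"
definition "times_F4 a b = (case a of Z4 \<Rightarrow> Z4 | O4 \<Rightarrow> b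
   | W4 \<Rightarrow> (case b of Z4 \<Rightarrow> Z4 | O4 \<Rightarrow> W4 | W4 \<Rightarrow> V4 | V4 \<Rightarrow> O4)
   | V4 \<Rightarrow> (case b of Z4 \<Rightarrow> Z4 | O4 \<Rightarrow> V4 | W4 \<Rightarrow> O4 | V4 \<Rightarrow> W4))"
definition "inverse_F4 a = (case a of Z4 \<Rightarrow> Z4 | O4 \<Rightarrow> O4 | W4 \<Rightarrow> V4 | V4 \<Rightarrow> W4)"
definition "divide_F4 (a::F4) b = a * inverse b"
instance
  by standard (auto simp: zero_F4_def one_F4_def plus_F4_def uminus_F4_def minus_F4_def times_F4_def
      inverse_F4_def divide_F4_def split: F4.splits)
end

lemma UNIV_F4: "(UNIV :: F4 set) = {0, 1, W4, V4}"
  by (auto simp: zero_F4_def one_F4_def intro: F4.exhaust)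

instance F4 :: finite
  by standard (simp add: UNIV_F4)

lemma card_F4: "CARD(F4) = 4"
  by (simp add: UNIV_F4 zero_F4_def one_F4_def)

definition design_points :: "(V \<times> F4) set" where
  "design_points = base_points \<times> UNIV"

definition design_blocks :: "(V \<times> F4) set set" where
  "design_blocks = inflation_blocks base_points base_lines"

lemma base_lines_card: "\<forall>l\<in>base_lines. card l \<le> CARD(F4)" "\<forall>l\<in>base_lines. 3 \<le> card l"
  using pbd_base card_F4 unfolding pbd_def by auto

lemma card_design_points: "card design_points = 124"
  by (simp add: design_points_def card_cartesian_product card_base_points card_F4)

lemma pbd_design: "pbd design_points design_blocks {3, 4}"
  using pbd_inflation[OF pbd_base base_lines_card(1)] card_F4
  by (simp add: design_points_def design_blocks_def insert_absorb)

lemma dim_prop_design: "dim_prop design_points design_blocks 3"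
  unfolding dim_prop_def
proof (intro allI impI)
  fix S assume S: "S \<subseteq> design_points \<and> card S = 3"
  then obtain x y z where xyz: "S = {x, y, z}" by (metis card_3_iff)
  let ?Z = "base_points \<inter> vec.span {fst x, fst y, fst z}"
  have "is_flat design_points design_blocks (?Z \<times> UNIV)"
    unfolding design_points_def design_blocks_def
    by (rule is_flat_inflation_Times[OF pbd_base base_lines_card(1) is_flat_plane])
  moreover have "?Z \<times> UNIV \<noteq> design_points"
    using plane_neq_base_points by (simp add: design_points_def Times_eq_cancel2)
  moreover have "S \<subseteq> ?Z \<times> UNIV"
    using S xyz by (auto simp: design_points_def vec.span_base)
  ultimately show "\<exists>Y. proper_flat design_points design_blocks Y \<and> S \<subseteq> Y"
    unfolding proper_flat_def by blast
qed

context
  fixes Y :: "(V \<times> F4) set"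
  assumes flat: "is_flat design_points design_blocks Y"
begin

lemma design_flat_inflation: "is_flat (base_points \<times> UNIV) (inflation_blocks base_points base_lines) Y"
  using flat by (simp add: design_points_def design_blocks_def)

lemma design_level_closed:
  assumes "P \<in> base_points" "Q \<in> base_points" "P \<noteq> Q" "R \<in> base_line P Q" "(P, c) \<in> Y" "(Q, c) \<in> Y"
  shows "(R, c) \<in> Y"
  using flat_level_closed[OF pbd_base base_lines_card(1) design_flat_inflation base_line_mem_base_lines[OF assms(1-3)]]
    ends_mem_base_line[OF assms(1,2)] assms(3-6) by blast

lemma design_new_level:
  assumes "P \<in> base_points" "Q \<in> base_points" "P \<noteq> Q" "R \<in> base_line P Q" "R \<noteq> P" "R \<noteq> Q"
    "(P, s) \<in> Y" "(Q, t) \<in> Y" "s \<noteq> t"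
  shows "\<exists>v. (R, v) \<in> Y \<and> v \<noteq> s \<and> v \<noteq> t"
  using flat_new_level[OF pbd_base base_lines_card(1) design_flat_inflation base_line_mem_base_lines[OF assms(1-3)]]
    ends_mem_base_line[OF assms(1,2)] assms(3-9) by blast

lemma design_flat_eq_if_fibre:
  assumes E: "E \<in> base_points" "fibre E \<subseteq> Y"
    and "(O0, a) \<in> Y" "(A1, b) \<in> Y" "(A2, c) \<in> Y" "(A3, d) \<in> Y"
  shows "Y = design_points"
proof -
  have fibre: "fibre X \<subseteq> Y" if "X \<in> base_points" "(X, t) \<in> Y" for X t
  proof (cases "X = E")
    case False
    then show ?thesis
      using fibre_spread_line[OF pbd_base base_lines_card(1) design_flat_inflation base_lines_card(2)
          base_line_mem_base_lines[OF E(1) that(1) False[symmetric]] _ _ _ False[symmetric] E(2) that(2)]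
        ends_mem_base_line[OF E(1) that(1)] by blast
  qed (use E in simp)
  let ?Z = "{P \<in> base_points. fibre P \<subseteq> Y}"
  have "?Z = base_points"
  proof (rule flat_eq_base_points)
    show "is_flat base_points base_lines ?Z"
      by (rule is_flat_full_fibres[OF pbd_base base_lines_card(1) design_flat_inflation base_lines_card(2)])
    show "O0 \<in> ?Z" "A1 \<in> ?Z" "A2 \<in> ?Z" "A3 \<in> ?Z"
      using fibre special_points_mem_base_points assms(3-6) by blast+
  qed
  then have "design_points \<subseteq> Y" by (auto simp: design_points_def fibre_def)
  then show ?thesis using is_flat_subset[OF flat] by blast
qed

lemma design_flat_eq_if_generators:
  assumes S0: "(O0, 0) \<in> Y" "(A1, 0) \<in> Y" "(A2, 0) \<in> Y" "(A3, 1) \<in> Y"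
  shows "Y = design_points"
proof -
  note pts = special_points_mem_base_points and dist = special_points_distinct
    and coll = special_collinearities
  have E1: "(E1, 0) \<in> Y" by (rule design_level_closed[OF pts(1,2) dist(1) coll(1) S0(1,2)])
  have E2: "(E2, 0) \<in> Y" by (rule design_level_closed[OF pts(1,3) dist(2) coll(2) S0(1,3)])
  have E12: "(E12, 0) \<in> Y" by (rule design_level_closed[OF pts(2,3) dist(3) coll(3) S0(2,3)])
  obtain v0 where v0: "(Q0, v0) \<in> Y" "v0 \<noteq> 0" "v0 \<noteq> 1"
    using design_new_level[OF pts(1,4) dist(4) coll(4) dist(7,8) S0(1,4)] by auto
  obtain v1 where v1: "(Q1, v1) \<in> Y" "v1 \<noteq> 0" "v1 \<noteq> 1"
    using design_new_level[OF pts(2,4) dist(5) coll(5) dist(9,10) S0(2,4)] by auto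
  obtain v2 where v2: "(Q2, v2) \<in> Y" "v2 \<noteq> 0" "v2 \<noteq> 1"
    using design_new_level[OF pts(3,4) dist(6) coll(6) dist(11,12) S0(3,4)] by auto
  have two_levels: "Y = design_points" if "E \<in> base_points" "(E, 0) \<in> Y" "(E, v) \<in> Y" "v \<noteq> 0" for E v
    using fibre_subset_flat[OF pbd_base base_lines_card(1) design_flat_inflation that(1,2,3)] that(4)
      design_flat_eq_if_fibre[OF that(1) _ S0] by blast
  \<comment> \<open>only two elements of \<open>F4\<close> differ from 0 and 1\<close>
  have "v = W4 \<or> v = V4" if "v \<noteq> 0" "v \<noteq> 1" for v
    using that by (cases v) (simp_all add: zero_F4_def one_F4_def)
  then consider "v0 = v1" | "v0 = v2" | "v1 = v2" using v0 v1 v2 by metis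
  then show ?thesis
  proof cases
    case 1
    then have "(E1, v0) \<in> Y" using design_level_closed[OF pts(8,9) dist(13) coll(7) v0(1)] v1(1) by simp
    then show ?thesis using two_levels[OF pts(5) E1] v0(2) by blast
  next
    case 2
    then have "(E2, v0) \<in> Y" using design_level_closed[OF pts(8,10) dist(14) coll(8) v0(1)] v2(1) by simp
    then show ?thesis using two_levels[OF pts(6) E2] v0(2) by blast
  next
    case 3
    then have "(E12, v1) \<in> Y" using design_level_closed[OF pts(9,10) dist(15) coll(9) v1(1)] v2(1) by simp
    then show ?thesis using two_levels[OF pts(7) E12] v1(2) by blast
  qed
qed

end

lemma not_dim_prop_design: "\<not> dim_prop design_points design_blocks 4"
proof
  let ?S = "{(O0, 0), (A1, 0), (A2, 0), (A3, 1 :: F4)}"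
  have "card ?S = 4" using special_points_distinct by simp
  moreover have "?S \<subseteq> design_points" using special_points_mem_base_points by (simp add: design_points_def)
  moreover assume "dim_prop design_points design_blocks 4"
  ultimately obtain Y where "proper_flat design_points design_blocks Y" "?S \<subseteq> Y"
    unfolding dim_prop_def by blast
  then show False using design_flat_eq_if_generators unfolding proper_flat_def by blast
qed

lemma pbd_dimension_design: "pbd_dimension design_points design_blocks = 3"
proof (rule pbd_dimension_eqI[OF _ dim_prop_design])
  show "finite design_points" by (simp add: design_points_def)
  show "Suc 3 \<le> card design_points" by (simp add: card_design_points)
  show "\<not> dim_prop design_points design_blocks (Suc 3)"
    using not_dim_prop_design by (simp add: numeral_eq_Suc)
qed

theorem proposition3p3:
  shows "\<exists>(X :: nat set) (B :: nat set set).
           card X = 124 \<and> pbd X B {3, 4} \<and> pbd_dimension X B = 3"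
proof -
  obtain f :: "V \<times> F4 \<Rightarrow> nat" where f: "inj_on f design_points"
    using finite_imp_inj_to_nat_seg[of design_points] by (auto simp: design_points_def)
  have "card (f ` design_points) = 124" using card_image[OF f] card_design_points by simp
  moreover have "pbd (f ` design_points) ((`) f ` design_blocks) {3, 4}"
    by (rule pbd_image[OF f pbd_design])
  moreover have "pbd_dimension (f ` design_points) ((`) f ` design_blocks) = 3"
    using pbd_dimension_image[OF f pbd_design] pbd_dimension_design by simp
  ultimately show ?thesis by blast
qed

end
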